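(* Consider the Markov chain $\mathcal{G}$ described in the context, with parameters $r\ge1$, $p_c,p_1,\ldots,p_r\in[0,1]$. Let $s$ be any state of the form $s_i^\alpha$ or $c_i^\alpha$, and write $p_{\max}=\max\{p_1,\ldots,p_r\}$. If $p_c<1$ and $\eta:=r\cdot p_{\max}\cdot p_c<1$, then $\mathbb{E}[N(s)]$ is finite.
   Context: Fix an integer $r\ge 1$ and probabilities $p_c,p_1,\ldots,p_r\in[0,1]$. Words $\alpha\in\{1,\ldots,r\}^*$ (finite sequences, $\varepsilon$ the empty word, $\alpha\cdot i$ concatenation, $r^k$ the word of $k$ letters $r$) are called blocks. The Markov chain $\mathcal{G}$ has the countable state space $\{s_i^\alpha, c_i^\alpha : 1\le i\le r,\ \alpha\in\{1,\ldots,r\}^*\}\cup\{\sharp,\bot\}$, initial state $\sharp$, and the following transition probabilities (all unlisted transitions have probability $0$): $p(\sharp,s_1^\varepsilon)=p_c$, $p(\sharp,\bot)=1-p_c$; $p(s_i^\alpha,c_i^\alpha)=p_i$ for $1\le i\le r$; $p(s_i^\alpha,s_{i+1}^\alpha)=1-p_i$ for $1\le i<r$; $p(c_i^\alpha,s_1^{\alpha\cdot i})=p_c$ for $1\le i\le r$; $p(c_i^\alpha,s_{i+1}^\alpha)=1-p_c$ for $1\le i<r$; for every word of the form $\gamma=\beta\cdot i\cdot r^k$ with $1\le i<r$, $k\ge 0$: $p(s_r^{\gamma},s_{i+1}^\beta)=1-p_r$ and $p(c_r^{\gamma},s_{i+1}^\beta)=1-p_c$; for every $\gamma\in r^*$ (including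 $\varepsilon$): $p(s_r^\gamma,\bot)=1-p_r$, $p(c_r^\gamma,\bot)=1-p_c$; and $p(\bot,\bot)=1$. The block of $s_i^\alpha$ and of $c_i^\alpha$ is $\alpha$. For a block $\alpha$ let $E_\alpha=\{s_j^\beta : 1\le j\le r,\ \beta\text{ a proper prefix of }\alpha\}\cup\{\bot\}$. For a state $s$ with block $\alpha$, $N(s)$ is the hitting time $\inf\{n\ge 0: X_n\in E_\alpha\}$ of $E_\alpha$ for the chain $(X_n)$ started at $X_0=s$, i.e. the number of states visited from $s$ (including those in deeper blocks) before the block of $s$ is left upward. *)

theory Defs
  imports "HOL-Analysis.Analysis"
begin

text \<open>States of the chain G.  S i a is s_i^a, C i a is c_i^a (blocks are lists of
letters in {1..r}), Sharp is the initial state and Bot the absorbing state.\<close>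

datatype state = S nat "nat list" | C nat "nat list" | Sharp | Bot

definition valid_block :: "nat \<Rightarrow> nat list \<Rightarrow> bool" where
  "valid_block r a \<longleftrightarrow> (\<forall>x\<in>set a. 1 \<le> x \<and> x \<le> r)"

text \<open>Target of leaving block g upward: for g = b @ [i] @ r^k with i < r it is
s_(i+1)^b; for g in r^* it is Bot.\<close>

definition up_target :: "nat \<Rightarrow> nat list \<Rightarrow> state" where
  "up_target r g =
     (let g' = dropWhile (\<lambda>x. x = r) (rev g)
      in if g' = [] then Bot else S (hd g' + 1) (rev (tl g')))"

fun trans :: "nat \<Rightarrow> real \<Rightarrow> (nat \<Rightarrow> real) \<Rightarrow> state \<Rightarrow> state \<Rightarrow> real" where
  "trans r pc p Sharp y =
     (if y = S 1 [] then pc else 0) + (if y = Bot then 1 - pc else 0)"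
| "trans r pc p Bot y = (if y = Bot then 1 else 0)"
| "trans r pc p (S i a) y =
     (if y = C i a then p i else 0)
     + (if i < r then (if y = S (i+1) a then 1 - p i else 0)
        else (if y = up_target r a then 1 - p r else 0))"
| "trans r pc p (C i a) y =
     (if y = S 1 (a @ [i]) then pc else 0)
     + (if i < r then (if y = S (i+1) a then 1 - pc else 0)
        else (if y = up_target r a then 1 - pc else 0))"

fun block :: "state \<Rightarrow> nat list" where
  "block (S i a) = a"
| "block (C i a) = a"
| "block Sharp = []"
| "block Bot = []"

definition exit_set :: "nat \<Rightarrow> nat list \<Rightarrow> state set" where
  "exit_set r a = {S j b | j b. 1 \<le> j \<and> j \<le> r \<and> (\<exists>c. c \<noteq> [] \<and> a = b @ c)} \<union> {Bot}"

text \<open>surv r pc p E n x = Pr_x(X_0 \<notin> E, ..., X_n \<notin> E) = Pr_x(hitting time of E > n).\<close>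

fun surv :: "nat \<Rightarrow> real \<Rightarrow> (nat \<Rightarrow> real) \<Rightarrow> state set \<Rightarrow> nat \<Rightarrow> state \<Rightarrow> ennreal" where
  "surv r pc p E 0 x = (if x \<in> E then 0 else 1)"
| "surv r pc p E (Suc n) x =
     (if x \<in> E then 0 else (\<Sum>\<^sub>\<infinity> y. ennreal (trans r pc p x y) * surv r pc p E n y))"

text \<open>E[N(s)] for the hitting time N(s) of E_(block s) started at s, via the
tail-sum formula E[N] = sum_(n\<ge>0) Pr(N > n) (valid for N with values in nat \<union> {\<infinity>}).\<close>

definition expected_N :: "nat \<Rightarrow> real \<Rightarrow> (nat \<Rightarrow> real) \<Rightarrow> state \<Rightarrow> ennreal" where
  "expected_N r pc p s = (\<Sum>n. surv r pc p (exit_set r (block s)) n s)"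

end

theory Submission
  imports Defs
begin

(* Foster-Lyapunov argument.  If V satisfies the drift inequality
   V x \<ge> 1 + \<Sum>y p(x,y) V y off E, then unrolling the recursion for the survival
   probabilities bounds every partial sum of E[N] = \<Sum>n Pr(N > n) by V.
   For the block a of s take V = c times the number of s-states still to be processed
   before leaving a: r + 1 - i at the current level, and r - j at every level entered
   through a letter j.  Processing s_i costs one step, with probability p_i one more
   step at c_i, and with a further probability p_c a fresh level of r s-states; so the
   drift inequality holds as soon as 1 + p_i (1 + p_c r c) \<le> c, which
   c = 2 / (1 - \<eta>) satisfies because \<eta> = r p_max p_c < 1. *)

lemma infsum_point_mass:
  fixes u :: "'b::{comm_monoid_add, t2_space}"
  shows "(\<Sum>\<^sub>\<infinity>y. if y = t then u else 0) = u"
proof -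
  have "(\<Sum>\<^sub>\<infinity>y. if y = t then u else 0) = (\<Sum>\<^sub>\<infinity>y\<in>{t}. if y = t then u else 0)"
    by (rule infsum_cong_neutral) auto
  then show ?thesis by simp
qed

lemma infsum_two_point_ennreal:
  fixes v :: "'a \<Rightarrow> ennreal"
  assumes "0 \<le> q1" "0 \<le> q2"
  shows "(\<Sum>\<^sub>\<infinity>y. ennreal ((if y = t1 then q1 else 0) + (if y = t2 then q2 else 0)) * v y)
     = ennreal q1 * v t1 + ennreal q2 * v t2"
proof -
  have "(\<Sum>\<^sub>\<infinity>y. ennreal ((if y = t1 then q1 else 0) + (if y = t2 then q2 else 0)) * v y)
     = (\<Sum>\<^sub>\<infinity>y. (if y = t1 then ennreal q1 * v t1 else 0) + (if y = t2 then ennreal q2 * v t2 else 0))"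
    using assms by (intro infsum_cong) (auto simp: ennreal_plus distrib_right)
  also have "\<dots> = (\<Sum>\<^sub>\<infinity>y. if y = t1 then ennreal q1 * v t1 else 0)
                 + (\<Sum>\<^sub>\<infinity>y. if y = t2 then ennreal q2 * v t2 else 0)"
    by (intro infsum_add nonneg_summable_on_complete) auto
  finally show ?thesis by (simp only: infsum_point_mass)
qed

lemma infsum_sum_ennreal:
  fixes f :: "'i \<Rightarrow> 'a \<Rightarrow> ennreal"
  assumes "finite I"
  shows "(\<Sum>\<^sub>\<infinity>y\<in>A. \<Sum>i\<in>I. f i y) = (\<Sum>i\<in>I. \<Sum>\<^sub>\<infinity>y\<in>A. f i y)"
  using assms
proof (induction I rule: finite_induct)
  case (insert i I)
  then have "(\<Sum>\<^sub>\<infinity>y\<in>A. \<Sum>i\<in>insert i I. f i y) = (\<Sum>\<^sub>\<infinity>y\<in>A. f i y + (\<Sum>i\<in>I. f i y))"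
    by simp
  also have "\<dots> = (\<Sum>\<^sub>\<infinity>y\<in>A. f i y) + (\<Sum>\<^sub>\<infinity>y\<in>A. \<Sum>i\<in>I. f i y)"
    by (intro infsum_add nonneg_summable_on_complete) auto
  finally show ?case using insert by simp
qed simp

lemma surv_in_set: "x \<in> E \<Longrightarrow> surv r pc p E n x = 0"
  by (cases n) auto

lemma surv_partial_sum_le_lyapunov:
  assumes drift: "\<And>x. x \<notin> E \<Longrightarrow> 1 + (\<Sum>\<^sub>\<infinity>y. ennreal (trans r pc p x y) * V y) \<le> V x"
  shows "(\<Sum>n<K. surv r pc p E n x) \<le> V x"
proof (induction K arbitrary: x)
  case (Suc K)
  show ?case
  proof (cases "x \<in> E")
    case False
    have "(\<Sum>n<Suc K. surv r pc p E n x) = surv r pc p E 0 x + (\<Sum>n<K. surv r pc p E (Suc n) x)"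
      by (rule sum.lessThan_Suc_shift)
    also have "\<dots> = 1 + (\<Sum>n<K. \<Sum>\<^sub>\<infinity>y. ennreal (trans r pc p x y) * surv r pc p E n y)"
      using False by simp
    also have "\<dots> = 1 + (\<Sum>\<^sub>\<infinity>y. ennreal (trans r pc p x y) * (\<Sum>n<K. surv r pc p E n y))"
      by (simp only: infsum_sum_ennreal[OF finite_lessThan] sum_distrib_left)
    also have "\<dots> \<le> 1 + (\<Sum>\<^sub>\<infinity>y. ennreal (trans r pc p x y) * V y)"
      by (intro add_left_mono infsum_mono nonneg_summable_on_complete mult_left_mono Suc.IH) auto
    also have "\<dots> \<le> V x"
      using drift False .
    finally show ?thesis .
  qed (simp add: surv_in_set)
qed simp

lemma expected_N_le_lyapunov:
  assumes "\<And>x. x \<notin> exit_set r (block s) \<Longrightarrow>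
             1 + (\<Sum>\<^sub>\<infinity>y. ennreal (trans r pc p x y) * V y) \<le> V x"
  shows "expected_N r pc p s \<le> V s"
  unfolding expected_N_def suminf_eq_SUP
  by (intro SUP_least surv_partial_sum_le_lyapunov) (use assms in blast)

lemma up_target_append_all_r:
  assumes "set t \<subseteq> {r}"
  shows "up_target r (b @ t) = up_target r b"
proof -
  have "dropWhile (\<lambda>x. x = r) (rev t @ rev b) = dropWhile (\<lambda>x. x = r) (rev b)"
    using assms by (intro dropWhile_append2) auto
  then show ?thesis by (simp add: up_target_def)
qed

lemma up_target_snoc: "j \<noteq> r \<Longrightarrow> up_target r (b @ [j]) = S (j + 1) b"
  by (simp add: up_target_def)

lemma up_target_Nil: "up_target r [] = Bot"
  by (simp add: up_target_def)

lemma split_last_non_r: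
  obtains "set d \<subseteq> {r}"
    | d1 j t where "d = d1 @ j # t" "j \<noteq> r" "set t \<subseteq> {r}"
  using split_list_last_prop[of d "\<lambda>x. x \<noteq> r"] by blast

lemma up_target_in_exit_set:
  assumes "valid_block r a"
  shows "up_target r a \<in> exit_set r a"
proof (cases a rule: split_last_non_r[of _ r])
  case 1
  then show ?thesis
    using up_target_append_all_r[of a r "[]"] by (simp add: up_target_Nil exit_set_def)
next
  case (2 b j t)
  then have "up_target r a = S (j + 1) b"
    by (simp add: up_target_append_all_r[of t r "b @ [j]", simplified] up_target_snoc)
  moreover have "j < r"
    using assms 2 by (auto simp: valid_block_def)
  ultimately show ?thesis
    using 2 by (auto simp: exit_set_def)
qed

definition skip_target :: "nat \<Rightarrow> nat \<Rightarrow> nat list \<Rightarrow> state" where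
  "skip_target r i b = (if i < r then S (i + 1) b else up_target r b)"

lemma trans_S_skip_target:
  "i \<le> r \<Longrightarrow> trans r pc p (S i b) y
     = (if y = C i b then p i else 0) + (if y = skip_target r i b then 1 - p i else 0)"
  by (auto simp: skip_target_def)

lemma trans_C_skip_target:
  "i \<le> r \<Longrightarrow> trans r pc p (C i b) y
     = (if y = S 1 (b @ [i]) then pc else 0) + (if y = skip_target r i b then 1 - pc else 0)"
  by (auto simp: skip_target_def)

definition remaining_cost :: "nat \<Rightarrow> real \<Rightarrow> nat list \<Rightarrow> real" where
  "remaining_cost r c d = c * (\<Sum>j\<leftarrow>d. real r - real j)"

lemma remaining_cost_append:
  "remaining_cost r c (d @ e) = remaining_cost r c d + remaining_cost r c e"
  by (simp add: remaining_cost_def algebra_simps)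

lemma remaining_cost_Cons:
  "remaining_cost r c (j # d) = (real r - real j) * c + remaining_cost r c d"
  by (simp add: remaining_cost_def algebra_simps)

lemma remaining_cost_all_r: "set d \<subseteq> {r} \<Longrightarrow> remaining_cost r c d = 0"
  unfolding remaining_cost_def by (induction d) auto

lemma remaining_cost_nonneg: "valid_block r d \<Longrightarrow> 0 \<le> c \<Longrightarrow> 0 \<le> remaining_cost r c d"
  unfolding remaining_cost_def valid_block_def
  by (intro mult_nonneg_nonneg sum_list_nonneg) auto

(* The value at c_i is exactly its one-step expectation.  States that cannot be reached
   from the block a before leaving it get the value \<infinity>, which makes the drift
   inequality trivial there. *)
definition potential :: "nat \<Rightarrow> real \<Rightarrow> real \<Rightarrow> nat list \<Rightarrow> state \<Rightarrow> ennreal" where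
  "potential r pc c a x =
     (if x \<in> exit_set r a then 0
      else case x of
        S i b \<Rightarrow>
          if 1 \<le> i \<and> i \<le> r \<and> (\<exists>d. b = a @ d \<and> valid_block r d)
          then ennreal ((real r + 1 - real i) * c + remaining_cost r c (drop (length a) b))
          else \<infinity>
      | C i b \<Rightarrow>
          if 1 \<le> i \<and> i \<le> r \<and> (\<exists>d. b = a @ d \<and> valid_block r d)
          then ennreal (1 + pc * real r * c + (real r - real i) * c
                        + remaining_cost r c (drop (length a) b))
          else \<infinity>
      | _ \<Rightarrow> \<infinity>)"

lemma S_notin_exit_set: "S i (a @ d) \<notin> exit_set r a"
  by (auto simp: exit_set_def)

lemma C_notin_exit_set: "C i b \<notin> exit_set r a"
  by (auto simp: exit_set_def)

lemma potential_S:
  "1 \<le> i \<Longrightarrow> i \<le> r \<Longrightarrow> valid_block r d \<Longrightarrow>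
   potential r pc c a (S i (a @ d)) = ennreal ((real r + 1 - real i) * c + remaining_cost r c d)"
  using S_notin_exit_set by (auto simp: potential_def)

lemma potential_C:
  "1 \<le> i \<Longrightarrow> i \<le> r \<Longrightarrow> valid_block r d \<Longrightarrow>
   potential r pc c a (C i (a @ d))
     = ennreal (1 + pc * real r * c + (real r - real i) * c + remaining_cost r c d)"
  using C_notin_exit_set by (auto simp: potential_def)

lemma potential_finite_cases:
  assumes "x \<notin> exit_set r a" "potential r pc c a x \<noteq> \<infinity>"
  obtains i d where "1 \<le> i" "i \<le> r" "valid_block r d" "x = S i (a @ d) \<or> x = C i (a @ d)"
  using assms by (cases x) (auto simp: potential_def split: if_splits)

lemma potential_skip_target:
  assumes "valid_block r a" "valid_block r d" "1 \<le> i" "i \<le> r"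
  shows "potential r pc c a (skip_target r i (a @ d))
           = ennreal ((real r - real i) * c + remaining_cost r c d)"
proof (cases "i < r")
  case True
  then show ?thesis
    using assms potential_S[of "i + 1" r d] by (simp add: skip_target_def)
next
  case False
  then have "i = r" using assms by simp
  show ?thesis
  proof (cases d rule: split_last_non_r[of _ r])
    case 1
    then show ?thesis
      using \<open>i = r\<close> assms up_target_in_exit_set[of r a]
      by (simp add: skip_target_def up_target_append_all_r remaining_cost_all_r potential_def)
  next
    case (2 d1 j t)
    have "up_target r (a @ d) = S (j + 1) (a @ d1)"
      using 2 up_target_append_all_r[of t r "a @ d1 @ [j]"] up_target_snoc[of j r "a @ d1"] by simp
    moreover have "j < r" "valid_block r d1"
      using assms 2 by (auto simp: valid_block_def)
    moreover have "remaining_cost r c d = (real r - real j) * c + remaining_cost r c d1"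
      using 2 by (simp add: remaining_cost_append remaining_cost_Cons remaining_cost_all_r)
    ultimately show ?thesis
      using \<open>i = r\<close> potential_S[of "j + 1" r d1] by (simp add: skip_target_def)
  qed
qed

lemma ennreal_linear_combination:
  "0 \<le> q1 \<Longrightarrow> 0 \<le> q2 \<Longrightarrow> 0 \<le> v1 \<Longrightarrow> 0 \<le> v2 \<Longrightarrow>
   ennreal q1 * ennreal v1 + ennreal q2 * ennreal v2 = ennreal (q1 * v1 + q2 * v2)"
  by (simp add: ennreal_mult ennreal_plus)

lemma potential_drift_S:
  assumes a: "valid_block r a" and d: "valid_block r d" and i: "1 \<le> i" "i \<le> r"
    and c: "0 \<le> c" and pc: "0 \<le> pc" and p: "0 \<le> p i" "p i \<le> 1"
    and cost: "1 + p i * (1 + pc * real r * c) \<le> c"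
  shows "1 + (\<Sum>\<^sub>\<infinity>y. ennreal (trans r pc p (S i (a @ d)) y) * potential r pc c a y)
           \<le> potential r pc c a (S i (a @ d))"
proof -
  define rest where "rest = (real r - real i) * c + remaining_cost r c d"
  have rest: "0 \<le> rest"
    using i c remaining_cost_nonneg[OF d c] by (simp add: rest_def)
  have "(\<Sum>\<^sub>\<infinity>y. ennreal (trans r pc p (S i (a @ d)) y) * potential r pc c a y)
      = ennreal (p i) * potential r pc c a (C i (a @ d))
        + ennreal (1 - p i) * potential r pc c a (skip_target r i (a @ d))"
    unfolding trans_S_skip_target[OF i(2)] using p by (intro infsum_two_point_ennreal) auto
  also have "\<dots> = ennreal (p i) * ennreal (1 + pc * real r * c + rest) + ennreal (1 - p i) * ennreal rest"
    by (simp only: potential_C[OF i d] potential_skip_target[OF a d i] rest_def add.assoc)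
  also have "\<dots> = ennreal (p i * (1 + pc * real r * c + rest) + (1 - p i) * rest)"
    using c pc p rest by (intro ennreal_linear_combination) auto
  finally have "1 + (\<Sum>\<^sub>\<infinity>y. ennreal (trans r pc p (S i (a @ d)) y) * potential r pc c a y)
      = ennreal (1 + (p i * (1 + pc * real r * c + rest) + (1 - p i) * rest))"
    using c pc p rest by (simp add: ennreal_plus)
  also have "\<dots> \<le> ennreal ((real r + 1 - real i) * c + remaining_cost r c d)"
    using cost by (intro ennreal_leI) (simp add: rest_def algebra_simps)
  also have "\<dots> = potential r pc c a (S i (a @ d))"
    using d i by (simp add: potential_S)
  finally show ?thesis .
qed

lemma potential_drift_C:
  assumes a: "valid_block r a" and d: "valid_block r d" and i: "1 \<le> i" "i \<le> r"
    and c: "0 \<le> c" and pc: "0 \<le> pc" "pc \<le> 1"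
  shows "1 + (\<Sum>\<^sub>\<infinity>y. ennreal (trans r pc p (C i (a @ d)) y) * potential r pc c a y)
           = potential r pc c a (C i (a @ d))"
proof -
  define rest where "rest = (real r - real i) * c + remaining_cost r c d"
  have rest: "0 \<le> rest"
    using i c remaining_cost_nonneg[OF d c] by (simp add: rest_def)
  have d': "valid_block r (d @ [i])"
    using d i by (simp add: valid_block_def)
  have "(\<Sum>\<^sub>\<infinity>y. ennreal (trans r pc p (C i (a @ d)) y) * potential r pc c a y)
      = ennreal pc * potential r pc c a (S 1 ((a @ d) @ [i]))
        + ennreal (1 - pc) * potential r pc c a (skip_target r i (a @ d))"
    unfolding trans_C_skip_target[OF i(2)] using pc by (intro infsum_two_point_ennreal) auto
  also have "\<dots> = ennreal pc * ennreal (real r * c + rest) + ennreal (1 - pc) * ennreal rest"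
  proof -
    have "remaining_cost r c (d @ [i]) = (real r - real i) * c + remaining_cost r c d"
      by (simp add: remaining_cost_append remaining_cost_Cons remaining_cost_all_r)
    then have "potential r pc c a (S 1 ((a @ d) @ [i])) = ennreal (real r * c + rest)"
      using potential_S[OF _ _ d', of 1 pc c a] i by (simp add: rest_def)
    then show ?thesis
      by (simp only: potential_skip_target[OF a d i] rest_def)
  qed
  also have "\<dots> = ennreal (pc * (real r * c + rest) + (1 - pc) * rest)"
    using c pc rest by (intro ennreal_linear_combination) auto
  finally have "1 + (\<Sum>\<^sub>\<infinity>y. ennreal (trans r pc p (C i (a @ d)) y) * potential r pc c a y)
      = ennreal (1 + (pc * (real r * c + rest) + (1 - pc) * rest))"
    using c pc rest by (simp add: ennreal_plus)
  also have "\<dots> = potential r pc c a (C i (a @ d))"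
    using d i by (simp add: potential_C rest_def algebra_simps)
  finally show ?thesis .
qed

lemma potential_drift:
  assumes a: "valid_block r a" and c: "0 \<le> c" and pc: "0 \<le> pc" "pc \<le> 1"
    and p: "\<And>i. 1 \<le> i \<Longrightarrow> i \<le> r \<Longrightarrow> 0 \<le> p i \<and> p i \<le> 1"
    and cost: "\<And>i. 1 \<le> i \<Longrightarrow> i \<le> r \<Longrightarrow> 1 + p i * (1 + pc * real r * c) \<le> c"
    and x: "x \<notin> exit_set r a"
  shows "1 + (\<Sum>\<^sub>\<infinity>y. ennreal (trans r pc p x y) * potential r pc c a y) \<le> potential r pc c a x"
proof (cases "potential r pc c a x = \<infinity>")
  case False
  with x obtain i d where i: "1 \<le> i" "i \<le> r" and d: "valid_block r d"
    and "x = S i (a @ d) \<or> x = C i (a @ d)"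
    by (rule potential_finite_cases)
  then show ?thesis
    using potential_drift_S[OF a d i c pc(1) _ _ cost] potential_drift_C[OF a d i c pc] p[OF i]
    by auto
qed simp

lemma drift_constant_exists:
  fixes p :: "nat \<Rightarrow> real"
  assumes pc: "0 \<le> pc"
    and p: "\<And>i. 1 \<le> i \<Longrightarrow> i \<le> r \<Longrightarrow> 0 \<le> p i \<and> p i \<le> 1"
    and eta: "real r * Max (p ` {1..r}) * pc < 1"
  obtains c where "0 \<le> c" "\<And>i. 1 \<le> i \<Longrightarrow> i \<le> r \<Longrightarrow> 1 + p i * (1 + pc * real r * c) \<le> c"
proof
  define pmax where "pmax = Max (p ` {1..r})"
  have p_le: "p i \<le> pmax" if "1 \<le> i" "i \<le> r" for i
    unfolding pmax_def using that by (intro Max_ge) auto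
  have eta': "real r * pmax * pc < 1"
    using eta by (simp add: pmax_def)
  define c where "c = 2 / (1 - real r * pmax * pc)"
  show c: "0 \<le> c"
    using eta' by (simp add: c_def)
  have c_eq: "c = 2 + real r * pmax * pc * c"
    using eta' by (simp add: c_def field_simps)
  fix i assume i: "1 \<le> i" "i \<le> r"
  have "p i * (pc * real r * c) \<le> pmax * (pc * real r * c)"
    using p_le[OF i] pc c by (intro mult_right_mono) auto
  then show "1 + p i * (1 + pc * real r * c) \<le> c"
    using p[OF i] c_eq by (simp add: algebra_simps)
qed

theorem lemma3p3:
  fixes r :: nat and pc :: real and p :: "nat \<Rightarrow> real" and s :: state
  assumes r: "r \<ge> 1"
    and pc: "0 \<le> pc" "pc \<le> 1"
    and p: "\<And>i. 1 \<le> i \<Longrightarrow> i \<le> r \<Longrightarrow> 0 \<le> p i \<and> p i \<le> 1"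
    and s: "\<exists>i a. 1 \<le> i \<and> i \<le> r \<and> valid_block r a \<and> (s = S i a \<or> s = C i a)"
    and pc1: "pc < 1"
    and eta: "real r * Max (p ` {1..r}) * pc < 1"
  shows "expected_N r pc p s < \<infinity>"
proof -
  obtain i a where i: "1 \<le> i" "i \<le> r" and a: "valid_block r a" and s_ia: "s = S i a \<or> s = C i a"
    using s by blast
  obtain c where c: "0 \<le> c" and cost: "\<And>i. 1 \<le> i \<Longrightarrow> i \<le> r \<Longrightarrow> 1 + p i * (1 + pc * real r * c) \<le> c"
    using drift_constant_exists[OF pc(1) p eta] by blast
  have "expected_N r pc p s \<le> potential r pc c a s"
    using s_ia potential_drift[OF a c pc p cost]
    by (intro expected_N_le_lyapunov) auto
  also have "\<dots> < \<infinity>"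
    using s_ia potential_S[OF i, of "[]"] potential_C[OF i, of "[]"]
    by (auto simp: valid_block_def)
  finally show ?thesis .
qed

end
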